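(* Let $M$ be a generalized modularity matrix on $V$ such that $M\mathbb{1}=0$, with induced modularity function $Q$. Let $\{S_1,\dots,S_p\}$ be a partition of $V$ into pairwise disjoint nonempty subsets such that $Q(S_i)>0$ for all $i$ and $Q(S_i,S_j)<0$ for all $i\ne j$. Then $M$ has at least $p-1$ positive eigenvalues (counted with multiplicity).
   Context: Let $V=\{1,\dots,n\}$ and let $A\in\mathbb{R}^{n\times n}$ be the adjacency matrix of an undirected connected weighted graph on $V$, possibly with loops, i.e. $A$ is symmetric, entrywise nonnegative and irreducible. A generalized modularity matrix is any matrix $M=A+\Delta-\sigma vv^{\mathsf T}$ where $\Delta$ is a real diagonal matrix, $v\ne0$ is entrywise nonnegative, and $\sigma>0$. $\mathbb{1}$ is the all-ones vector and $\mathbb{1}_S$ the characteristic vector of $S\subseteq V$; $Q(S)=\mathbb{1}_S^{\mathsf T}M\mathbb{1}_S$, and for disjoint $S,T$, $Q(S,T)=\mathbb{1}_S^{\mathsf T}M\mathbb{1}_T$. *)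

theory Defs
  imports "Jordan_Normal_Form.Char_Poly"
begin

text \<open>Vertex set V = {0..<n} (0-based indexing of {1..n}).
  Edge relation of the weighted graph with adjacency matrix A.\<close>
definition graph_edges :: "real mat \<Rightarrow> (nat \<times> nat) set" where
  "graph_edges A = {(i, j). i < dim_row A \<and> j < dim_row A \<and> A $$ (i, j) > 0}"

definition connected_weighted_adjacency :: "nat \<Rightarrow> real mat \<Rightarrow> bool" where
  "connected_weighted_adjacency n A \<longleftrightarrow>
     A \<in> carrier_mat n n \<and> A\<^sup>T = A \<and>
     (\<forall>i<n. \<forall>j<n. A $$ (i, j) \<ge> 0) \<and>
     (\<forall>i<n. \<forall>j<n. (i, j) \<in> (graph_edges A)\<^sup>*)"

definition generalized_modularity_matrix :: "nat \<Rightarrow> real mat \<Rightarrow> bool" where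
  "generalized_modularity_matrix n M \<longleftrightarrow>
     (\<exists>A \<Delta> v \<sigma>. connected_weighted_adjacency n A \<and>
        \<Delta> \<in> carrier_mat n n \<and> (\<forall>i<n. \<forall>j<n. i \<noteq> j \<longrightarrow> \<Delta> $$ (i, j) = 0) \<and>
        v \<in> carrier_vec n \<and> v \<noteq> 0\<^sub>v n \<and> (\<forall>i<n. v $ i \<ge> 0) \<and>
        (\<sigma>::real) > 0 \<and>
        M = A + \<Delta> - \<sigma> \<cdot>\<^sub>m mat n n (\<lambda>(i, j). v $ i * v $ j))"

definition modQ2 :: "real mat \<Rightarrow> nat set \<Rightarrow> nat set \<Rightarrow> real" where
  "modQ2 M S T = (\<Sum>i\<in>S. \<Sum>j\<in>T. M $$ (i, j))"

definition modQ :: "real mat \<Rightarrow> nat set \<Rightarrow> real" where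
  "modQ M S = modQ2 M S S"

definition num_pos_eigenvalues :: "real mat \<Rightarrow> nat" where
  "num_pos_eigenvalues M =
     (\<Sum>a\<in>{a. a > 0 \<and> poly (char_poly M) a = 0}. order a (char_poly M))"

end

theory Submission
  imports Defs
begin

text \<open>
  Diagonalise the symmetric matrix M = U diag(d) U^T with U orthogonal; then
  x^T M x = sum_k d_k ((U^T x)_k)^2, and the positive eigenvalues of M are the positive d_k.
  If there were fewer than p - 1 of them, some nonzero x = sum_{a < p-1} c_a 1_{S_a} would be
  orthogonal to every eigenvector with positive eigenvalue, so x^T M x <= 0.  On the other hand
  x^T M x = sum_{a,b} c_a c_b Q(S_a, S_b), and since M 1 = 0 the block matrix Q(S_a, S_b) has zero
  row sums, so this equals -1/2 sum_{a,b} Q(S_a, S_b) (c_a - c_b)^2.  All off-diagonal blocks are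
  negative and c is not constant (c_{p-1} = 0 while c_a <> 0 for some a), hence x^T M x > 0.
\<close>

lemma index_mult_mat_sum:
  assumes "A \<in> carrier_mat n k" "B \<in> carrier_mat k m" "i < n" "j < m"
  shows "(A * B) $$ (i, j) = (\<Sum>l<k. A $$ (i, l) * B $$ (l, j))"
  using assms by (simp add: scalar_prod_def atLeast0LessThan)

lemma symmetric_mat_entry:
  assumes "M \<in> carrier_mat n n" "M\<^sup>T = M" "i < n" "j < n"
  shows "M $$ (i, j) = M $$ (j, i)"
  using assms by (metis carrier_matD index_transpose_mat(1))

lemma householder_reflection:
  fixes u :: "nat \<Rightarrow> real"
  assumes n: "0 < n" and unit: "(\<Sum>i<n. u i ^ 2) = 1" and u0: "u 0 \<le> 0"
  shows "\<exists>H \<in> carrier_mat n n. H\<^sup>T = H \<and> H * H = 1\<^sub>m n \<and> (\<forall>i<n. H $$ (i, 0) = u i)"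
proof -
  \<comment> \<open>The reflection in the hyperplane orthogonal to w = e_0 - u; the sign condition keeps
    a = 1 - u_0 = |w|^2 / 2 nonzero.\<close>
  define w where "w i = of_bool (i = 0) - u i" for i
  define a where "a = 1 - u 0"
  define H where "H = mat n n (\<lambda>(i, j). of_bool (i = j) - w i * w j / a)"
  have a: "a > 0" using u0 by (simp add: a_def)
  have Hc: "H \<in> carrier_mat n n" by (simp add: H_def)
  have ww: "(\<Sum>k<n. w k * w k) = 2 * a"
  proof -
    have "(\<Sum>k<n. w k * w k) = (\<Sum>k<n. of_bool (k = 0) * (1 - 2 * u k) + u k ^ 2)"
      by (rule sum.cong) (auto simp: w_def power2_eq_square algebra_simps)
    also have "\<dots> = 2 * a" using n unit by (simp add: sum.distrib a_def)
    finally show ?thesis .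
  qed
  have "H * H = 1\<^sub>m n"
  proof (rule eq_matI)
    fix i j assume "i < dim_row (1\<^sub>m n :: real mat)" "j < dim_col (1\<^sub>m n :: real mat)"
    then have i: "i < n" and j: "j < n" by auto
    have delta: "(\<Sum>k<n. of_bool (i = k) * f k) = f i" "(\<Sum>k<n. g k * of_bool (k = j)) = g j"
      for f g :: "nat \<Rightarrow> real" using i j by simp_all
    have "(H * H) $$ (i, j)
        = (\<Sum>k<n. (of_bool (i = k) - w i * w k / a) * (of_bool (k = j) - w k * w j / a))"
      using i j by (subst index_mult_mat_sum[OF Hc Hc i j]) (auto simp: H_def intro!: sum.cong)
    also have "\<dots> = (\<Sum>k<n. of_bool (i = k) * of_bool (k = j)) - (\<Sum>k<n. of_bool (i = k) * (w k * w j / a))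
        - (\<Sum>k<n. w i * w k / a * of_bool (k = j)) + w i * w j / (a * a) * (\<Sum>k<n. w k * w k)"
      by (simp add: algebra_simps sum.distrib sum_subtractf sum_distrib_left sum_divide_distrib)
    also have "\<dots> = of_bool (i = j) - 2 * (w i * w j / a) + w i * w j / (a * a) * (\<Sum>k<n. w k * w k)"
      by (simp only: delta)
    also have "\<dots> = of_bool (i = j)" using a by (simp add: ww field_simps)
    finally show "(H * H) $$ (i, j) = 1\<^sub>m n $$ (i, j)" using i j by simp
  qed (use Hc in auto)
  moreover have "H\<^sup>T = H" by (rule eq_matI) (auto simp: H_def)
  moreover have "H $$ (i, 0) = u i" if "i < n" for i
    using that n a by (simp add: H_def w_def a_def field_simps)
  ultimately show ?thesis using Hc by blast
qed

lemma complex_eigenvector_exists: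
  fixes M :: "complex mat"
  assumes "M \<in> carrier_mat n n" "0 < n"
  shows "\<exists>a v. v \<in> carrier_vec n \<and> v \<noteq> 0\<^sub>v n \<and> M *\<^sub>v v = a \<cdot>\<^sub>v v"
proof -
  obtain as where cp: "char_poly M = (\<Prod>a\<leftarrow>as. [:- a, 1:])" and len: "length as = n"
    using char_poly_factorized[OF assms(1)] by blast
  have "poly (char_poly M) (as ! 0) = 0"
    unfolding cp by (rule linear_poly_root) (use len assms(2) in simp)
  then have "eigenvalue M (as ! 0)" using eigenvalue_root_char_poly[OF assms(1)] by simp
  then show ?thesis using assms(1) unfolding eigenvalue_def eigenvector_def by blast
qed

lemma symmetric_bilinear_swap:
  fixes M :: "nat \<Rightarrow> nat \<Rightarrow> real"
  assumes "\<And>i j. i < n \<Longrightarrow> j < n \<Longrightarrow> M i j = M j i"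
  shows "(\<Sum>i<n. y i * (\<Sum>j<n. M i j * x j)) = (\<Sum>i<n. x i * (\<Sum>j<n. M i j * y j))"
proof -
  have "(\<Sum>i<n. y i * (\<Sum>j<n. M i j * x j)) = (\<Sum>i<n. \<Sum>j<n. y i * M i j * x j)"
    by (simp add: sum_distrib_left mult.assoc)
  also have "\<dots> = (\<Sum>j<n. \<Sum>i<n. y i * M i j * x j)" by (rule sum.swap)
  also have "\<dots> = (\<Sum>j<n. x j * (\<Sum>i<n. M j i * y i))"
    by (auto simp: sum_distrib_left assms intro!: sum.cong)
  finally show ?thesis .
qed

lemma symmetric_real_eigenvector:
  fixes M :: "real mat"
  assumes Mc: "M \<in> carrier_mat n n" and sym: "M\<^sup>T = M" and n: "0 < n"
  shows "\<exists>r z. (\<exists>i<n. z i \<noteq> 0) \<and> (\<forall>i<n. (\<Sum>j<n. M $$ (i, j) * z j) = r * z i)"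
proof -
  obtain a v where vc: "v \<in> carrier_vec n" and v0: "v \<noteq> 0\<^sub>v n"
    and ev: "map_mat complex_of_real M *\<^sub>v v = a \<cdot>\<^sub>v v"
    using complex_eigenvector_exists[of "map_mat complex_of_real M" n] Mc n by auto
  define x where "x j = Re (v $ j)" for j
  define y where "y j = Im (v $ j)" for j
  have eq: "(\<Sum>j<n. complex_of_real (M $$ (i, j)) * v $ j) = a * v $ i" if i: "i < n" for i
    using arg_cong[OF ev, of "\<lambda>w. w $ i"] i Mc vc by (simp add: scalar_prod_def atLeast0LessThan)
  have eqx: "(\<Sum>j<n. M $$ (i, j) * x j) = Re a * x i - Im a * y i" if "i < n" for i
    using arg_cong[OF eq[OF that], of Re] by (simp add: Re_sum x_def y_def)
  have eqy: "(\<Sum>j<n. M $$ (i, j) * y j) = Im a * x i + Re a * y i" if "i < n" for i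
    using arg_cong[OF eq[OF that], of Im] by (simp add: Im_sum x_def y_def)
  \<comment> \<open>Symmetry of M gives y^T M x = x^T M y, which says Im a * |v|^2 = 0.\<close>
  have "(\<Sum>i<n. Re a * (x i * y i) - Im a * (y i * y i)) = (\<Sum>i<n. y i * (\<Sum>j<n. M $$ (i, j) * x j))"
    by (rule sum.cong[OF refl]) (simp add: eqx; simp add: algebra_simps)
  also have "\<dots> = (\<Sum>i<n. x i * (\<Sum>j<n. M $$ (i, j) * y j))"
    by (rule symmetric_bilinear_swap) (use symmetric_mat_entry[OF Mc sym] in blast)
  also have "\<dots> = (\<Sum>i<n. Im a * (x i * x i) + Re a * (x i * y i))"
    by (rule sum.cong[OF refl]) (simp add: eqy; simp add: algebra_simps)
  finally have "Im a * ((\<Sum>i<n. x i * x i) + (\<Sum>i<n. y i * y i)) = 0"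
    by (simp add: sum.distrib sum_subtractf sum_distrib_left[symmetric] algebra_simps)
  moreover obtain i where i: "i < n" and vi: "v $ i \<noteq> 0"
    using v0 vc by (metis carrier_vecD eq_vecI index_zero_vec(1,2))
  moreover have "x i * x i + y i * y i \<le> (\<Sum>i<n. x i * x i) + (\<Sum>i<n. y i * y i)"
    using i by (intro add_mono member_le_sum) auto
  moreover have "x i * x i + y i * y i > 0"
    using vi by (simp add: x_def y_def complex_eq_iff sum_squares_gt_zero_iff)
  ultimately have "Im a = 0" by (metis mult_eq_0_iff not_less order_less_le_trans)
  show ?thesis
  proof (cases "\<exists>i<n. x i \<noteq> 0")
    case True
    then show ?thesis using eqx \<open>Im a = 0\<close> by (intro exI[of _ "Re a"] exI[of _ x]) auto
  next
    case False
    then have "y i \<noteq> 0" using i vi by (auto simp: x_def y_def complex_eq_iff)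
    then show ?thesis using eqy \<open>Im a = 0\<close> False i by (intro exI[of _ "Re a"] exI[of _ y]) auto
  qed
qed

lemma symmetric_unit_eigenvector:
  fixes M :: "real mat"
  assumes Mc: "M \<in> carrier_mat n n" and sym: "M\<^sup>T = M" and n: "0 < n"
  shows "\<exists>r u. (\<Sum>i<n. u i ^ 2) = 1 \<and> u 0 \<le> 0 \<and> (\<forall>i<n. (\<Sum>j<n. M $$ (i, j) * u j) = r * u i)"
proof -
  obtain r z where nz: "\<exists>i<n. z i \<noteq> 0" and ev: "\<forall>i<n. (\<Sum>j<n. M $$ (i, j) * z j) = r * z i"
    using symmetric_real_eigenvector[OF Mc sym n] by blast
  define s where "s = (\<Sum>i<n. z i ^ 2)"
  from nz obtain i where i: "i < n" "z i \<noteq> 0" by blast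
  have "0 < z i ^ 2" using i by simp
  also have "z i ^ 2 \<le> s" unfolding s_def using i by (intro member_le_sum) auto
  finally have s: "s > 0" .
  define c where "c = (if z 0 > 0 then -1 else 1) / sqrt s"
  have "c ^ 2 * s = 1" using s by (simp add: c_def power_divide)
  then have "(\<Sum>i<n. (c * z i) ^ 2) = 1"
    by (simp add: power_mult_distrib sum_distrib_left[symmetric] s_def)
  moreover have "c * z 0 \<le> 0" using s by (auto simp: c_def divide_nonpos_pos mult_le_0_iff)
  moreover have "(\<Sum>j<n. M $$ (i, j) * (c * z j)) = r * (c * z i)" if "i < n" for i
    using ev that by (simp add: sum_distrib_left[symmetric] algebra_simps)
  ultimately show ?thesis by (intro exI[of _ r] exI[of _ "\<lambda>i. c * z i"]) auto
qed

lemma symmetric_conjugate: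
  fixes M H :: "'a :: comm_ring mat"
  assumes Mc: "M \<in> carrier_mat n n" and Hc: "H \<in> carrier_mat n n" and "M\<^sup>T = M" "H\<^sup>T = H"
  shows "(H * M * H)\<^sup>T = H * M * H"
proof -
  have "(H * M * H)\<^sup>T = H\<^sup>T * (H * M)\<^sup>T" by (rule transpose_mult) (use Hc Mc in auto)
  also have "\<dots> = H * (M * H)" by (simp only: transpose_mult[OF Hc Mc] assms(3,4))
  also have "\<dots> = H * M * H" using assoc_mult_mat[OF Hc Mc Hc] by simp
  finally show ?thesis .
qed

lemma orthogonal_mult:
  fixes A B :: "'a :: comm_ring_1 mat"
  assumes A: "A \<in> carrier_mat n n" and B: "B \<in> carrier_mat n n"
    and "A\<^sup>T * A = 1\<^sub>m n" "B\<^sup>T * B = 1\<^sub>m n"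
  shows "(A * B)\<^sup>T * (A * B) = 1\<^sub>m n"
proof -
  have "(A * B)\<^sup>T * (A * B) = B\<^sup>T * (A\<^sup>T * A) * B"
    using A B by (simp add: transpose_mult[OF A B] assoc_mult_mat[of _ n n _ n _ n] mult_carrier_mat[of _ n n _ n])
  then show ?thesis using A B assms(3,4) by simp
qed

lemma mult_transpose_congruence:
  fixes A V D :: "'a :: comm_ring_1 mat"
  assumes A: "A \<in> carrier_mat n n" and V: "V \<in> carrier_mat n n" and D: "D \<in> carrier_mat n n"
  shows "(A * V) * D * (A * V)\<^sup>T = A * (V * D * V\<^sup>T) * A\<^sup>T"
  using A V D by (simp add: transpose_mult[OF A V] assoc_mult_mat[of _ n n _ n _ n] mult_carrier_mat[of _ n n _ n])

lemma involution_conjugate: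
  fixes H M :: "'a :: comm_ring_1 mat"
  assumes H: "H \<in> carrier_mat n n" and M: "M \<in> carrier_mat n n" and HH: "H * H = 1\<^sub>m n"
  shows "H * (H * M * H) * H = M"
proof -
  have "H * (H * M * H) * H = (H * H) * M * (H * H)"
    using H M by (simp add: assoc_mult_mat[of _ n n _ n _ n] mult_carrier_mat[of _ n n _ n])
  then show ?thesis using HH M by simp
qed

lemma reflection_deflates_eigenvector:
  fixes M H :: "real mat"
  assumes Mc: "M \<in> carrier_mat n n" and Hc: "H \<in> carrier_mat n n" and HH: "H * H = 1\<^sub>m n"
    and col: "\<forall>i<n. H $$ (i, 0) = u i" and ev: "\<forall>i<n. (\<Sum>j<n. M $$ (i, j) * u j) = r * u i"
    and i: "i < n"
  shows "(H * M * H) $$ (i, 0) = (if i = 0 then r else 0)"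
proof -
  have n: "0 < n" using i by simp
  have HM: "H * M \<in> carrier_mat n n" using Hc Mc by simp
  have "(H * M * H) $$ (i, 0) = (\<Sum>k<n. (\<Sum>l<n. H $$ (i, l) * M $$ (l, k)) * u k)"
    using col by (simp add: index_mult_mat_sum[OF HM Hc i n] index_mult_mat_sum[OF Hc Mc i])
  also have "\<dots> = (\<Sum>k<n. \<Sum>l<n. H $$ (i, l) * (M $$ (l, k) * u k))"
    by (simp add: sum_distrib_right mult.assoc)
  also have "\<dots> = (\<Sum>l<n. H $$ (i, l) * (\<Sum>k<n. M $$ (l, k) * u k))"
    by (subst sum.swap) (simp add: sum_distrib_left)
  also have "\<dots> = r * (\<Sum>l<n. H $$ (i, l) * H $$ (l, 0))"
    using ev col by (simp add: sum_distrib_left algebra_simps)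
  also have "\<dots> = r * (H * H) $$ (i, 0)" by (simp add: index_mult_mat_sum[OF Hc Hc i n])
  finally show ?thesis using HH i n by simp
qed

lemma border_mat_orthogonal:
  fixes U :: "'a :: comm_ring_1 mat"
  assumes U: "U \<in> carrier_mat m m" and UU: "U\<^sup>T * U = 1\<^sub>m m"
  shows "(four_block_mat (1\<^sub>m 1) (0\<^sub>m 1 m) (0\<^sub>m m 1) U)\<^sup>T * four_block_mat (1\<^sub>m 1) (0\<^sub>m 1 m) (0\<^sub>m m 1) U
    = 1\<^sub>m (Suc m)"
  using U UU
  by (simp add: transpose_four_block_mat[OF one_carrier_mat zero_carrier_mat zero_carrier_mat U]
      mult_four_block_mat[OF one_carrier_mat zero_carrier_mat zero_carrier_mat carrier_matI
        one_carrier_mat zero_carrier_mat zero_carrier_mat U])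

lemma border_mat_diag:
  fixes U :: "'a :: comm_ring_1 mat"
  assumes U: "U \<in> carrier_mat m m"
  shows "four_block_mat (1\<^sub>m 1) (0\<^sub>m 1 m) (0\<^sub>m m 1) U * mat_diag (Suc m) (\<lambda>k. if k = 0 then r else d (k - 1))
      * (four_block_mat (1\<^sub>m 1) (0\<^sub>m 1 m) (0\<^sub>m m 1) U)\<^sup>T
    = four_block_mat (mat 1 1 (\<lambda>_. r)) (0\<^sub>m 1 m) (0\<^sub>m m 1) (U * mat_diag m d * U\<^sup>T)"
proof -
  have "mat_diag (Suc m) (\<lambda>k. if k = 0 then r else d (k - 1))
      = four_block_mat (mat 1 1 (\<lambda>_. r)) (0\<^sub>m 1 m) (0\<^sub>m m 1) (mat_diag m d)"
    by (rule eq_matI) (auto simp: mat_diag_def)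
  moreover have "four_block_mat (1\<^sub>m 1) (0\<^sub>m 1 m) (0\<^sub>m m 1) U
      * four_block_mat (mat 1 1 (\<lambda>_. r)) (0\<^sub>m 1 m) (0\<^sub>m m 1) (mat_diag m d)
    = four_block_mat (mat 1 1 (\<lambda>_. r)) (0\<^sub>m 1 m) (0\<^sub>m m 1) (U * mat_diag m d)"
    using U by (subst mult_four_block_mat[of _ 1 1 _ m _ m _ _ 1 _ m])
      (auto simp: left_mult_zero_mat[OF mat_diag_dim])
  moreover have "(four_block_mat (1\<^sub>m 1) (0\<^sub>m 1 m) (0\<^sub>m m 1) U)\<^sup>T
      = four_block_mat (1\<^sub>m 1) (0\<^sub>m 1 m) (0\<^sub>m m 1) U\<^sup>T"
    using U by (simp add: transpose_four_block_mat[OF one_carrier_mat zero_carrier_mat zero_carrier_mat U])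
  moreover have "four_block_mat (mat 1 1 (\<lambda>_. r)) (0\<^sub>m 1 m) (0\<^sub>m m 1) (U * mat_diag m d)
      * four_block_mat (1\<^sub>m 1) (0\<^sub>m 1 m) (0\<^sub>m m 1) U\<^sup>T
    = four_block_mat (mat 1 1 (\<lambda>_. r)) (0\<^sub>m 1 m) (0\<^sub>m m 1) (U * mat_diag m d * U\<^sup>T)"
    using U by (subst mult_four_block_mat[of _ 1 1 _ m _ m _ _ 1 _ m])
      (auto simp: right_mult_zero_mat[of "U * mat_diag m d" m m]
        left_add_zero_mat[of "U * mat_diag m d * U\<^sup>T" m m])
  ultimately show ?thesis by simp
qed

lemma symmetric_first_column_block:
  fixes C :: "'a :: zero mat"
  assumes Cc: "C \<in> carrier_mat (Suc m) (Suc m)" and sym: "C\<^sup>T = C"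
    and col: "\<And>i. i < Suc m \<Longrightarrow> C $$ (i, 0) = (if i = 0 then r else 0)"
  shows "C = four_block_mat (mat 1 1 (\<lambda>_. r)) (0\<^sub>m 1 m) (0\<^sub>m m 1) (mat m m (\<lambda>(i, j). C $$ (Suc i, Suc j)))"
proof (rule eq_matI)
  fix i j assume "i < dim_row (four_block_mat (mat 1 1 (\<lambda>_. r)) (0\<^sub>m 1 m) (0\<^sub>m m 1) (mat m m (\<lambda>(i, j). C $$ (Suc i, Suc j))))"
    and "j < dim_col (four_block_mat (mat 1 1 (\<lambda>_. r)) (0\<^sub>m 1 m) (0\<^sub>m m 1) (mat m m (\<lambda>(i, j). C $$ (Suc i, Suc j))))"
  then have i: "i < Suc m" and j: "j < Suc m" by auto
  then show "C $$ (i, j) = four_block_mat (mat 1 1 (\<lambda>_. r)) (0\<^sub>m 1 m) (0\<^sub>m m 1) (mat m m (\<lambda>(i, j). C $$ (Suc i, Suc j))) $$ (i, j)"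
    using col[OF i] col[OF j] symmetric_mat_entry[OF Cc sym i j] by auto
qed (use Cc in auto)

theorem symmetric_orthogonal_diagonalization:
  fixes M :: "real mat"
  assumes "M \<in> carrier_mat n n" "M\<^sup>T = M"
  shows "\<exists>U d. U \<in> carrier_mat n n \<and> U\<^sup>T * U = 1\<^sub>m n \<and> M = U * mat_diag n d * U\<^sup>T"
  using assms
proof (induction n arbitrary: M)
  case 0
  then show ?case by (intro exI[of _ "1\<^sub>m 0"] exI conjI) auto
next
  case (Suc m M)
  then have Mc: "M \<in> carrier_mat (Suc m) (Suc m)" and sym: "M\<^sup>T = M" by auto
  obtain r u where unit: "(\<Sum>i<Suc m. u i ^ 2) = 1" and u0: "u 0 \<le> 0"
    and ev: "\<forall>i<Suc m. (\<Sum>j<Suc m. M $$ (i, j) * u j) = r * u i"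
    using symmetric_unit_eigenvector[OF Mc sym] by blast
  obtain H where Hc: "H \<in> carrier_mat (Suc m) (Suc m)" and HT: "H\<^sup>T = H"
    and HH: "H * H = 1\<^sub>m (Suc m)" and col: "\<forall>i<Suc m. H $$ (i, 0) = u i"
    using householder_reflection[OF _ unit u0] by blast
  define C where "C = H * M * H"
  have Cc: "C \<in> carrier_mat (Suc m) (Suc m)" using Hc Mc by (simp add: C_def)
  have CT: "C\<^sup>T = C" unfolding C_def by (rule symmetric_conjugate[OF Mc Hc sym HT])
  define M' where "M' = mat m m (\<lambda>(i, j). C $$ (Suc i, Suc j))"
  have C_block: "C = four_block_mat (mat 1 1 (\<lambda>_. r)) (0\<^sub>m 1 m) (0\<^sub>m m 1) M'"
    unfolding M'_def using Cc CT reflection_deflates_eigenvector[OF Mc Hc HH col ev]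
    by (intro symmetric_first_column_block) (auto simp: C_def)
  have "M'\<^sup>T = M'" using symmetric_mat_entry[OF Cc CT] by (intro eq_matI) (auto simp: M'_def)
  then obtain U' d' where U'c: "U' \<in> carrier_mat m m" and U'U': "U'\<^sup>T * U' = 1\<^sub>m m"
    and M'_eq: "M' = U' * mat_diag m d' * U'\<^sup>T"
    using Suc.IH[of M'] by (auto simp: M'_def)
  define V where "V = four_block_mat (1\<^sub>m 1) (0\<^sub>m 1 m) (0\<^sub>m m 1) U'"
  define d where "d k = (if k = 0 then r else d' (k - 1))" for k
  have Vc: "V \<in> carrier_mat (Suc m) (Suc m)"
    using four_block_carrier_mat[OF one_carrier_mat[of 1] U'c] by (simp add: V_def)
  have C_eq: "C = V * mat_diag (Suc m) d * V\<^sup>T"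
    unfolding C_block M'_eq V_def d_def by (rule border_mat_diag[OF U'c, symmetric])
  have "M = H * C * H\<^sup>T" using involution_conjugate[OF Hc Mc HH] HT by (simp add: C_def)
  also have "\<dots> = (H * V) * mat_diag (Suc m) d * (H * V)\<^sup>T"
    unfolding C_eq by (rule mult_transpose_congruence[OF Hc Vc mat_diag_dim, symmetric])
  moreover have "(H * V)\<^sup>T * (H * V) = 1\<^sub>m (Suc m)"
    using orthogonal_mult[OF Hc Vc] HH HT border_mat_orthogonal[OF U'c U'U'] by (simp add: V_def)
  ultimately show ?case using Hc Vc by (intro exI[of _ "H * V"] exI[of _ d]) auto
qed

lemma char_poly_mat_diag:
  fixes d :: "nat \<Rightarrow> 'a :: comm_ring_1"
  shows "char_poly (mat_diag n d) = (\<Prod>k\<leftarrow>[0..<n]. [:- d k, 1:])"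
proof -
  have "upper_triangular (mat_diag n d)" by (auto simp: upper_triangular_def mat_diag_def)
  then have "char_poly (mat_diag n d) = (\<Prod>a\<leftarrow>diag_mat (mat_diag n d). [:- a, 1:])"
    by (rule char_poly_upper_triangular[OF mat_diag_dim])
  also have "diag_mat (mat_diag n d) = map d [0..<n]"
    by (rule nth_equalityI) (auto simp: diag_mat_def mat_diag_def)
  finally show ?thesis by (simp add: o_def)
qed

lemma order_char_poly_mat_diag:
  fixes d :: "nat \<Rightarrow> 'a :: idom"
  shows "order a (char_poly (mat_diag n d)) = card {k. k < n \<and> d k = a}"
proof -
  have "order a (char_poly (mat_diag n d)) = sum_list (map (order a) (map (\<lambda>k. [:- d k, 1:]) [0..<n]))"
    unfolding char_poly_mat_diag by (rule order_prod_list) auto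
  also have "\<dots> = (\<Sum>k\<in>{0..<n}. if d k = a then 1 else 0)"
    by (simp add: o_def order_linear' interv_sum_list_conv_sum_set_nat)
  also have "\<dots> = card {k. k < n \<and> d k = a}"
    by (simp add: sum.If_cases Int_def atLeast0LessThan)
  finally show ?thesis .
qed

lemma num_pos_eigenvalues_mat_diag:
  "num_pos_eigenvalues (mat_diag n d) = card {k. k < n \<and> d k > 0}"
proof -
  define P where "P = {k. k < n \<and> d k > 0}"
  have roots: "{a. a > 0 \<and> poly (char_poly (mat_diag n d)) a = 0} = d ` P"
    unfolding char_poly_mat_diag P_def by (auto simp: poly_prod_list_zero_iff)
  have "num_pos_eigenvalues (mat_diag n d) = (\<Sum>a\<in>d ` P. card {k. k < n \<and> d k = a})"
    unfolding num_pos_eigenvalues_def roots order_char_poly_mat_diag ..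
  also have "\<dots> = card (\<Union>a\<in>d ` P. {k. k < n \<and> d k = a})"
    by (rule card_UN_disjoint[symmetric]) (auto simp: P_def)
  also have "(\<Union>a\<in>d ` P. {k. k < n \<and> d k = a}) = P" by (auto simp: P_def)
  finally show ?thesis unfolding P_def .
qed

lemma num_pos_eigenvalues_orthogonal_diag:
  assumes Mc: "M \<in> carrier_mat n n" and U: "U \<in> carrier_mat n n" and UU: "U\<^sup>T * U = 1\<^sub>m n"
    and M_eq: "M = U * mat_diag n d * U\<^sup>T"
  shows "num_pos_eigenvalues M = card {k. k < n \<and> d k > 0}"
proof -
  have UT: "U\<^sup>T \<in> carrier_mat n n" using U by simp
  have UUT: "U * U\<^sup>T = 1\<^sub>m n" by (rule mat_mult_left_right_inverse[OF UT U UU])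
  have "{M, mat_diag n d, U, U\<^sup>T} \<subseteq> carrier_mat n n" using Mc U UT by simp
  then have "char_poly M = char_poly (mat_diag n d)"
    by (intro char_poly_similar similar_matI[OF _ UUT UU M_eq])
  then have "num_pos_eigenvalues M = num_pos_eigenvalues (mat_diag n d)"
    by (simp add: num_pos_eigenvalues_def)
  then show ?thesis by (simp add: num_pos_eigenvalues_mat_diag)
qed

lemma quadratic_form_orthogonal_diag:
  fixes U :: "real mat"
  assumes U: "U \<in> carrier_mat n n"
  shows "(\<Sum>i<n. \<Sum>j<n. x i * (U * mat_diag n d * U\<^sup>T) $$ (i, j) * x j)
    = (\<Sum>k<n. d k * (\<Sum>i<n. U $$ (i, k) * x i)\<^sup>2)"
proof -
  have entry: "(U * mat_diag n d * U\<^sup>T) $$ (i, j) = (\<Sum>k<n. U $$ (i, k) * d k * U $$ (j, k))"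
    if "i < n" "j < n" for i j
    using U that by (simp add: mat_diag_mult_right[OF U] scalar_prod_def atLeast0LessThan)
  have "(\<Sum>i<n. \<Sum>j<n. x i * (U * mat_diag n d * U\<^sup>T) $$ (i, j) * x j)
      = (\<Sum>i<n. \<Sum>j<n. \<Sum>k<n. d k * (U $$ (i, k) * x i) * (U $$ (j, k) * x j))"
    by (intro sum.cong refl) (simp add: entry sum_distrib_left sum_distrib_right mult_ac)
  also have "\<dots> = (\<Sum>k<n. \<Sum>i<n. \<Sum>j<n. d k * (U $$ (i, k) * x i) * (U $$ (j, k) * x j))"
    by (subst sum.swap) (subst (2) sum.swap, rule refl)
  also have "\<dots> = (\<Sum>k<n. d k * (\<Sum>i<n. U $$ (i, k) * x i)\<^sup>2)"
    by (simp add: power2_eq_square sum_product sum_distrib_left mult_ac)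
  finally show ?thesis .
qed

lemma exists_nontrivial_solution:
  fixes f :: "nat \<Rightarrow> nat \<Rightarrow> 'a :: field"
  assumes "K < m"
  shows "\<exists>c. (\<exists>a<m. c a \<noteq> 0) \<and> (\<forall>r<K. (\<Sum>a<m. f r a * c a) = 0)"
proof -
  \<comment> \<open>Pad the K equations with zero rows to a singular m \<times> m system.\<close>
  define E where "E = mat\<^sub>r m m (\<lambda>r. if r = K then 0\<^sub>v m else if r < K then vec m (f r) else 0\<^sub>v m)"
  have E: "E \<in> carrier_mat m m" by (simp add: E_def)
  have "det E = 0" unfolding E_def by (rule det_row_0) (use assms in auto)
  then obtain v where v: "v \<in> carrier_vec m" "v \<noteq> 0\<^sub>v m" and Ev: "E *\<^sub>v v = 0\<^sub>v m"
    using det_0_iff_vec_prod_zero[OF E] by blast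
  have "\<exists>a<m. v $ a \<noteq> 0" using v by (metis carrier_vecD eq_vecI index_zero_vec(1,2))
  moreover have "(\<Sum>a<m. f r a * v $ a) = 0" if "r < K" for r
    using arg_cong[OF Ev, of "\<lambda>w. w $ r"] that assms v
    by (simp add: E_def scalar_prod_def atLeast0LessThan)
  ultimately show ?thesis by (intro exI[of _ "\<lambda>a. v $ a"]) auto
qed

theorem num_pos_eigenvalues_ge_positive_subspace:
  fixes M :: "real mat" and w :: "nat \<Rightarrow> nat \<Rightarrow> real"
  assumes Mc: "M \<in> carrier_mat n n" and sym: "M\<^sup>T = M"
    and pos: "\<And>c. \<exists>a<m. c a \<noteq> 0 \<Longrightarrow>
      (\<Sum>i<n. \<Sum>j<n. (\<Sum>a<m. c a * w a i) * M $$ (i, j) * (\<Sum>a<m. c a * w a j)) > 0"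
  shows "m \<le> num_pos_eigenvalues M"
proof (rule ccontr)
  assume few: "\<not> m \<le> num_pos_eigenvalues M"
  obtain U d where Uc: "U \<in> carrier_mat n n" and UU: "U\<^sup>T * U = 1\<^sub>m n"
    and M_eq: "M = U * mat_diag n d * U\<^sup>T"
    using symmetric_orthogonal_diagonalization[OF Mc sym] by blast
  define P where "P = {k. k < n \<and> d k > 0}"
  have "card P < m"
    using few num_pos_eigenvalues_orthogonal_diag[OF Mc Uc UU M_eq] by (simp add: P_def)
  define ks where "ks = sorted_list_of_set P"
  have ks: "length ks = card P" "set ks = P" by (simp_all add: ks_def P_def)
  \<comment> \<open>A combination orthogonal to the fewer than m eigenvectors with positive eigenvalue.\<close>
  obtain c where c0: "\<exists>a<m. c a \<noteq> 0"
    and orth: "\<And>r. r < card P \<Longrightarrow> (\<Sum>a<m. (\<Sum>i<n. U $$ (i, ks ! r) * w a i) * c a) = 0"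
    using exists_nontrivial_solution[OF \<open>card P < m\<close>, of "\<lambda>r a. \<Sum>i<n. U $$ (i, ks ! r) * w a i"]
    by blast
  define x where "x i = (\<Sum>a<m. c a * w a i)" for i
  have coord: "(\<Sum>i<n. U $$ (i, k) * x i) = 0" if "k \<in> P" for k
  proof -
    have "k \<in> set ks" using that ks by simp
    then obtain r where r: "r < card P" "k = ks ! r" using ks by (auto simp: in_set_conv_nth)
    have "(\<Sum>i<n. U $$ (i, k) * x i) = (\<Sum>i<n. \<Sum>a<m. U $$ (i, k) * w a i * c a)"
      unfolding x_def sum_distrib_left by (simp add: mult_ac)
    also have "\<dots> = (\<Sum>a<m. (\<Sum>i<n. U $$ (i, k) * w a i) * c a)"
      by (subst sum.swap) (simp add: sum_distrib_right)
    finally show ?thesis using orth r by simp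
  qed
  have "(\<Sum>i<n. \<Sum>j<n. x i * M $$ (i, j) * x j) = (\<Sum>k<n. d k * (\<Sum>i<n. U $$ (i, k) * x i)\<^sup>2)"
    unfolding M_eq by (rule quadratic_form_orthogonal_diag[OF Uc])
  also have "\<dots> \<le> 0"
  proof (rule sum_nonpos)
    fix k assume k: "k \<in> {..<n}"
    show "d k * (\<Sum>i<n. U $$ (i, k) * x i)\<^sup>2 \<le> 0"
    proof (cases "k \<in> P")
      case True
      then show ?thesis using coord by simp
    next
      case False
      then have "d k \<le> 0" using k by (simp add: P_def)
      then show ?thesis by (simp add: mult_nonpos_nonneg)
    qed
  qed
  finally show False using pos[OF c0] unfolding x_def by linarith
qed

lemma sum_over_partition:
  fixes n p :: nat
  assumes disj: "disjoint_family_on S {..<p}"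
    and cover: "(\<Union>a<p. S a) = {0..<n}"
  shows "(\<Sum>i<n. f i) = (\<Sum>a<p. \<Sum>i\<in>S a. f i)"
proof -
  have "finite (S a)" if "a < p" for a
    using cover that by (metis UN_upper finite_atLeastLessThan finite_subset lessThan_iff)
  then have "sum f (\<Union>a<p. S a) = (\<Sum>a<p. sum f (S a))"
    using disj by (intro sum.UNION_disjoint) (auto simp: disjoint_family_on_def)
  then show ?thesis using cover by (simp add: atLeast0LessThan)
qed

lemma quadratic_form_blockwise_constant:
  fixes n p :: nat
  assumes disj: "disjoint_family_on S {..<p}"
    and cover: "(\<Union>a<p. S a) = {0..<n}"
    and x: "\<And>a i. a < p \<Longrightarrow> i \<in> S a \<Longrightarrow> x i = c a"
  shows "(\<Sum>i<n. \<Sum>j<n. x i * M $$ (i, j) * x j) = (\<Sum>a<p. \<Sum>b<p. c a * c b * modQ2 M (S a) (S b))"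
proof -
  have "(\<Sum>i<n. \<Sum>j<n. x i * M $$ (i, j) * x j)
      = (\<Sum>a<p. \<Sum>i\<in>S a. \<Sum>b<p. \<Sum>j\<in>S b. x i * M $$ (i, j) * x j)"
    by (simp only: sum_over_partition[OF disj cover])
  also have "\<dots> = (\<Sum>a<p. \<Sum>i\<in>S a. \<Sum>b<p. \<Sum>j\<in>S b. c a * c b * M $$ (i, j))"
    by (intro sum.cong refl) (simp add: x)
  also have "\<dots> = (\<Sum>a<p. \<Sum>b<p. \<Sum>i\<in>S a. \<Sum>j\<in>S b. c a * c b * M $$ (i, j))"
    by (intro sum.cong refl sum.swap)
  also have "\<dots> = (\<Sum>a<p. \<Sum>b<p. c a * c b * modQ2 M (S a) (S b))"
    by (simp add: modQ2_def sum_distrib_left)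
  finally show ?thesis .
qed

lemma modQ2_swap:
  assumes Mc: "M \<in> carrier_mat n n" and sym: "M\<^sup>T = M" and "S \<subseteq> {..<n}" "T \<subseteq> {..<n}"
  shows "modQ2 M S T = modQ2 M T S"
proof -
  have "modQ2 M S T = (\<Sum>j\<in>T. \<Sum>i\<in>S. M $$ (i, j))" unfolding modQ2_def by (rule sum.swap)
  also have "\<dots> = modQ2 M T S"
    unfolding modQ2_def using assms symmetric_mat_entry[OF Mc sym] by (intro sum.cong refl) blast
  finally show ?thesis .
qed

lemma modQ2_partition_row_sum:
  fixes n p :: nat
  assumes Mc: "M \<in> carrier_mat n n" and rows: "M *\<^sub>v vec n (\<lambda>_. 1) = 0\<^sub>v n"
    and disj: "disjoint_family_on S {..<p}"
    and cover: "(\<Union>a<p. S a) = {0..<n}" and a: "a < p"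
  shows "(\<Sum>b<p. modQ2 M (S a) (S b)) = 0"
proof -
  have row: "(\<Sum>j<n. M $$ (i, j)) = 0" if "i < n" for i
    using arg_cong[OF rows, of "\<lambda>v. v $ i"] Mc that by (simp add: scalar_prod_def atLeast0LessThan)
  have "(\<Sum>b<p. modQ2 M (S a) (S b)) = (\<Sum>i\<in>S a. \<Sum>b<p. \<Sum>j\<in>S b. M $$ (i, j))"
    unfolding modQ2_def by (rule sum.swap)
  also have "\<dots> = (\<Sum>i\<in>S a. \<Sum>j<n. M $$ (i, j))"
    by (simp only: sum_over_partition[OF disj cover, symmetric])
  also have "\<dots> = 0"
  proof (rule sum.neutral, rule ballI)
    fix i assume "i \<in> S a"
    then have "i < n" using cover a by auto
    then show "(\<Sum>j<n. M $$ (i, j)) = 0" by (rule row)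
  qed
  finally show ?thesis .
qed

lemma zero_row_sum_form_pos:
  fixes B :: "nat \<Rightarrow> nat \<Rightarrow> real" and c :: "nat \<Rightarrow> real"
  assumes sym: "\<And>a b. a < p \<Longrightarrow> b < p \<Longrightarrow> B a b = B b a"
    and rows: "\<And>a. a < p \<Longrightarrow> (\<Sum>b<p. B a b) = 0"
    and neg: "\<And>a b. a < p \<Longrightarrow> b < p \<Longrightarrow> a \<noteq> b \<Longrightarrow> B a b < 0"
    and u: "u < p" and v: "v < p" and c: "c u \<noteq> c v"
  shows "(\<Sum>a<p. \<Sum>b<p. c a * c b * B a b) > 0"
proof -
  define t where "t a b = - B a b * (c a - c b)\<^sup>2" for a b
  have t_nonneg: "t a b \<ge> 0" if "a < p" "b < p" for a b
    using neg[OF that] by (cases "a = b") (auto simp: t_def intro!: mult_nonpos_nonneg)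
  have "u \<noteq> v" using c by auto
  then have "0 < t u v" using neg[OF u v] c by (simp add: t_def mult_neg_pos)
  also have "\<dots> \<le> (\<Sum>b<p. t u b)" using v u t_nonneg by (intro member_le_sum) auto
  also have "\<dots> \<le> (\<Sum>a<p. \<Sum>b<p. t a b)"
    using u t_nonneg by (intro member_le_sum[of u "{..<p}" "\<lambda>a. \<Sum>b<p. t a b"] sum_nonneg) auto
  also have "\<dots> = 2 * (\<Sum>a<p. \<Sum>b<p. c a * c b * B a b)
      - (\<Sum>a<p. (\<Sum>b<p. B a b) * (c a)\<^sup>2) - (\<Sum>b<p. (\<Sum>a<p. B b a) * (c b)\<^sup>2)"
  proof -
    have "(\<Sum>a<p. \<Sum>b<p. B a b * (c b)\<^sup>2) = (\<Sum>b<p. (\<Sum>a<p. B b a) * (c b)\<^sup>2)"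
      by (subst sum.swap) (simp add: sum_distrib_right sym)
    then show ?thesis
      by (simp add: t_def power2_eq_square algebra_simps sum.distrib sum_subtractf
          sum_distrib_left sum_distrib_right)
  qed
  also have "\<dots> = 2 * (\<Sum>a<p. \<Sum>b<p. c a * c b * B a b)" by (simp add: rows)
  finally show ?thesis by simp
qed

lemma generalized_modularity_matrix_symmetric:
  assumes "generalized_modularity_matrix n M"
  shows "M \<in> carrier_mat n n" "M\<^sup>T = M"
proof -
  obtain A \<Delta> v \<sigma> where A: "connected_weighted_adjacency n A"
    and \<Delta>: "\<Delta> \<in> carrier_mat n n" "\<forall>i<n. \<forall>j<n. i \<noteq> j \<longrightarrow> \<Delta> $$ (i, j) = 0"
    and M: "M = A + \<Delta> - \<sigma> \<cdot>\<^sub>m mat n n (\<lambda>(i, j). v $ i * v $ j)"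
    using assms unfolding generalized_modularity_matrix_def by blast
  have Ac: "A \<in> carrier_mat n n" and AT: "A\<^sup>T = A"
    using A unfolding connected_weighted_adjacency_def by auto
  show "M \<in> carrier_mat n n" using Ac \<Delta>(1) unfolding M carrier_mat_def by simp
  show "M\<^sup>T = M"
  proof (rule eq_matI)
    fix i j assume "i < dim_row M" "j < dim_col M"
    then have i: "i < n" and j: "j < n" using Ac \<Delta> M by auto
    have "\<Delta> $$ (j, i) = \<Delta> $$ (i, j)" using \<Delta>(2) i j by (cases "i = j") auto
    then show "M\<^sup>T $$ (i, j) = M $$ (i, j)"
      using symmetric_mat_entry[OF Ac AT i j] Ac \<Delta>(1) M i j by simp
  qed (use Ac \<Delta> M in auto)
qed

lemma partition_indicator_form_pos:
  fixes n p :: nat and M :: "real mat" and c :: "nat \<Rightarrow> real"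
  assumes Mc: "M \<in> carrier_mat n n" and sym: "M\<^sup>T = M" and rows: "M *\<^sub>v vec n (\<lambda>_. 1) = 0\<^sub>v n"
    and disj: "disjoint_family_on S {..<p}" and cover: "(\<Union>a<p. S a) = {0..<n}"
    and c0: "\<exists>a<p - 1. c a \<noteq> 0"
    and neg: "\<And>a b. a < p \<Longrightarrow> b < p \<Longrightarrow> a \<noteq> b \<Longrightarrow> modQ2 M (S a) (S b) < 0"
  shows "(\<Sum>i<n. \<Sum>j<n. (\<Sum>a<p - 1. c a * of_bool (i \<in> S a)) * M $$ (i, j)
    * (\<Sum>a<p - 1. c a * of_bool (j \<in> S a))) > 0"
proof -
  obtain a0 where a0: "a0 < p - 1" "c a0 \<noteq> 0" using c0 by blast
  define c' where "c' a = (if a < p - 1 then c a else 0)" for a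
  have S_sub: "S a \<subseteq> {..<n}" if "a < p" for a using cover that by auto
  have block: "(\<Sum>a<p - 1. c a * of_bool (i \<in> S a)) = c' b" if "b < p" "i \<in> S b" for b i
  proof -
    have "i \<in> S a \<longleftrightarrow> a = b" if "a < p" for a
      using disj that \<open>b < p\<close> \<open>i \<in> S b\<close> unfolding disjoint_family_on_def by blast
    then have "(\<Sum>a<p - 1. c a * of_bool (i \<in> S a)) = (\<Sum>a<p - 1. if a = b then c a else 0)"
      by (intro sum.cong) auto
    then show ?thesis by (simp add: c'_def)
  qed
  have "0 < (\<Sum>a<p. \<Sum>b<p. c' a * c' b * modQ2 M (S a) (S b))"
    using a0 by (intro zero_row_sum_form_pos[where u = a0 and v = "p - 1"])
      (auto simp: c'_def neg modQ2_swap[OF Mc sym] S_sub modQ2_partition_row_sum[OF Mc rows disj cover])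
  then show ?thesis by (simp only: quadratic_form_blockwise_constant[OF disj cover block])
qed

theorem mainTheorem11:
  fixes n p :: nat and M :: "real mat" and S :: "nat \<Rightarrow> nat set"
  assumes "generalized_modularity_matrix n M"
    and "M *\<^sub>v vec n (\<lambda>_. 1) = 0\<^sub>v n"
    and "\<And>i. i < p \<Longrightarrow> S i \<noteq> {}"
    and "\<And>i j. i < p \<Longrightarrow> j < p \<Longrightarrow> i \<noteq> j \<Longrightarrow> S i \<inter> S j = {}"
    and "(\<Union>i<p. S i) = {0..<n}"
    and "\<And>i. i < p \<Longrightarrow> modQ M (S i) > 0"
    and "\<And>i j. i < p \<Longrightarrow> j < p \<Longrightarrow> i \<noteq> j \<Longrightarrow> modQ2 M (S i) (S j) < 0"
  shows "num_pos_eigenvalues M \<ge> p - 1"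
proof -
  have disj: "disjoint_family_on S {..<p}" using assms(4) by (auto simp: disjoint_family_on_def)
  note Mc = generalized_modularity_matrix_symmetric(1)[OF assms(1)]
    and sym = generalized_modularity_matrix_symmetric(2)[OF assms(1)]
  show ?thesis
  proof (rule num_pos_eigenvalues_ge_positive_subspace[OF Mc sym, of _ "\<lambda>a i. of_bool (i \<in> S a)"])
    fix c :: "nat \<Rightarrow> real" assume "\<exists>a<p - 1. c a \<noteq> 0"
    then show "(\<Sum>i<n. \<Sum>j<n. (\<Sum>a<p - 1. c a * of_bool (i \<in> S a)) * M $$ (i, j)
        * (\<Sum>a<p - 1. c a * of_bool (j \<in> S a))) > 0"
      by (rule partition_indicator_form_pos[OF Mc sym assms(2) disj assms(5)]) (fact assms(7))
  qed
qed

end
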